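(* Let $k,\ell,n$ be integers with $2\le\ell<k/2$, $n\ge1$, and let $G_1$, $U_i$, $H_1^1$, $H_1^2$, $H_2$, $tr_1$ and $\min$ be as in the context. Let $s\ge1$ and let $P=(e,e_1,\dots,e_s,e')$ be an $(\ell,k)$-path (edges listed in order) all of whose edges lie in $H_1^1\cup H_1^2\cup H_2$, such that the set of edges of $P$ lying in $H_1^1$ is exactly $\{e,e'\}$. Then: (a) every edge of $P$ lying in $H_1^2$ belongs to $\{e_1,e_s\}$; (b) if both $e_1$ and $e_s$ lie in $H_1^2$ and $e_1\neq e_s$, then $s=2$; (c) for every $i=1,\dots,s$, $\min(e_i)\in tr_1(e)\cap tr_1(e')$.
   Context: Let $G_1$ be a graph on vertex set $[n]=\{1,\dots,n\}$. Let $\{A_i,B_i: i=1,\dots,2n\}$ be $4n$ pairwise disjoint finite sets with $|A_i|=2\lfloor k/2\rfloor+\ell$ for $1\le i\le n$ and $|A_i|=2k-2\ell-3$ for $n+1\le i\le 2n$; put $U_i=A_i\cup B_i$ and $V=\bigcup_{i=1}^{2n}U_i$. For $S\subseteq V$ let $tr(S)=\{i:S\cap U_i\ne\emptyset\}$, $tr_1(S)=tr(S)\cap[n]$, $\min(S)=\min tr(S)$. Define $H_1^1$ as the set of $k$-subsets $e\subseteq V$ such that for some edge $\{i,j\}$ of $G_1$, $tr_1(e)=\{i,j\}$, $|A_i\cap e|\ge\lfloor k/2\rfloor$ and $|A_j\cap e|\ge\lfloor k/2\rfloor$. Define $H_1^2$ as the set of $k$-subsets $e\subseteq V$ such that for some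 $i\in[n]$, $tr(e)=\{i,n+i\}$, $|A_i\cap e|=\ell+1$ and $|A_{n+i}\cap e|=k-\ell-1$. Let $H_2$ be the set of $k$-subsets $e\subseteq V$ with $|e\cap U_{\min(e)}|\ge k-\ell+1$. An $(\ell,k)$-path is a $k$-graph with distinct vertices $v_1,\dots,v_s$, $s\equiv\ell\pmod{k-\ell}$, $s\ge k$, and edges $\{v_{i(k-\ell)+1},\dots,v_{i(k-\ell)+k}\}$, $i=0,\dots,(s-k)/(k-\ell)$. *)

theory Defs
  imports Main
begin

definition blockU :: "(nat \<Rightarrow> 'a set) \<Rightarrow> (nat \<Rightarrow> 'a set) \<Rightarrow> nat \<Rightarrow> 'a set" where
  "blockU A B i = A i \<union> B i"

definition groundV :: "nat \<Rightarrow> (nat \<Rightarrow> 'a set) \<Rightarrow> (nat \<Rightarrow> 'a set) \<Rightarrow> 'a set" where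
  "groundV n A B = (\<Union>i\<in>{1..2*n}. blockU A B i)"

definition tr :: "nat \<Rightarrow> (nat \<Rightarrow> 'a set) \<Rightarrow> (nat \<Rightarrow> 'a set) \<Rightarrow> 'a set \<Rightarrow> nat set" where
  "tr n A B S = {i \<in> {1..2*n}. S \<inter> blockU A B i \<noteq> {}}"

definition tr1 :: "nat \<Rightarrow> (nat \<Rightarrow> 'a set) \<Rightarrow> (nat \<Rightarrow> 'a set) \<Rightarrow> 'a set \<Rightarrow> nat set" where
  "tr1 n A B S = tr n A B S \<inter> {1..n}"

definition minS :: "nat \<Rightarrow> (nat \<Rightarrow> 'a set) \<Rightarrow> (nat \<Rightarrow> 'a set) \<Rightarrow> 'a set \<Rightarrow> nat" where
  "minS n A B S = Min (tr n A B S)"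

text \<open>The graph G_1 on [n] is given as a set of 2-element subsets of {1..n}.\<close>
definition H11 :: "nat \<Rightarrow> nat \<Rightarrow> nat set set \<Rightarrow> (nat \<Rightarrow> 'a set) \<Rightarrow> (nat \<Rightarrow> 'a set) \<Rightarrow> 'a set set" where
  "H11 k n G A B = {e. e \<subseteq> groundV n A B \<and> finite e \<and> card e = k \<and>
      (\<exists>i j. {i, j} \<in> G \<and> tr1 n A B e = {i, j} \<and>
             card (A i \<inter> e) \<ge> k div 2 \<and> card (A j \<inter> e) \<ge> k div 2)}"

definition H12 :: "nat \<Rightarrow> nat \<Rightarrow> nat \<Rightarrow> (nat \<Rightarrow> 'a set) \<Rightarrow> (nat \<Rightarrow> 'a set) \<Rightarrow> 'a set set" where
  "H12 l k n A B = {e. e \<subseteq> groundV n A B \<and> finite e \<and> card e = k \<and>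
      (\<exists>i\<in>{1..n}. tr n A B e = {i, n + i} \<and>
             card (A i \<inter> e) = l + 1 \<and> card (A (n + i) \<inter> e) = k - l - 1)}"

definition H2 :: "nat \<Rightarrow> nat \<Rightarrow> nat \<Rightarrow> (nat \<Rightarrow> 'a set) \<Rightarrow> (nat \<Rightarrow> 'a set) \<Rightarrow> 'a set set" where
  "H2 l k n A B = {e. e \<subseteq> groundV n A B \<and> finite e \<and> card e = k \<and>
      card (e \<inter> blockU A B (minS n A B e)) \<ge> k - l + 1}"

text \<open>An (l,k)-path given by its vertex sequence vs = v_1 ... v_s (distinct vertices);
  its j-th edge (j = 0,1,...) is {v_{j(k-l)+1}, ..., v_{j(k-l)+k}}.\<close>
definition is_lk_path :: "nat \<Rightarrow> nat \<Rightarrow> 'a list \<Rightarrow> bool" where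
  "is_lk_path l k vs \<longleftrightarrow> distinct vs \<and> length vs \<ge> k \<and>
      length vs mod (k - l) = l mod (k - l)"

definition path_edge :: "nat \<Rightarrow> nat \<Rightarrow> 'a list \<Rightarrow> nat \<Rightarrow> 'a set" where
  "path_edge l k vs j = set (take k (drop (j * (k - l)) vs))"

definition num_edges :: "nat \<Rightarrow> nat \<Rightarrow> 'a list \<Rightarrow> nat" where
  "num_edges l k vs = (length vs - k) div (k - l) + 1"

end

theory Submission
  imports Defs
begin

(* Consecutive edges of the path share exactly l \<ge> 2 vertices. Such an l-set meets the block
   U_min(f) whenever f \<in> H_2; an H_1^2-edge lies inside U_i \<union> U_(n+i) with min = i; and an
   H_1^1-edge has at most one vertex outside its two A-blocks. Hence min(e_j), with n + i
   identified with i, is one and the same index c along the whole inner path, and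
   c \<in> tr_1(e) \<inter> tr_1(e'). Counting inside A_c, of size 2 floor(k/2) + l and already met in
   floor(k/2) vertices by each of e and e', excludes an H_1^2-edge disjoint from e and e';
   counting inside A_(n+c), of size 2k - 2l - 3, excludes two disjoint H_1^2-edges. So
   e_2, ..., e_(s-1) are H_2-edges, and e_1 or e_s is one too when s \<ge> 3; min is constant
   along runs of H_2-edges, and min(e_1) = min(e_s) = c. *)

lemma set_take_drop_eq_image_nth:
  assumes "m + k \<le> length xs"
  shows "set (take k (drop m xs)) = (!) xs ` {m..<m+k}"
proof -
  have "length (take k (drop m xs)) = k" using assms by simp
  then have "set (take k (drop m xs)) = (\<lambda>i. xs ! (m + i)) ` {..<k}"
    using assms by (auto simp: in_set_conv_nth image_iff cong: conj_cong)
  also have "\<dots> = (!) xs ` (plus m ` {..<k})"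
    by (simp add: image_image)
  also have "\<dots> = (!) xs ` {m..<m+k}"
    by (simp add: lessThan_atLeast0 add.commute)
  finally show ?thesis .
qed

lemma path_edge_end_le_length:
  assumes "is_lk_path l k vs" "2 * l < k" "j < num_edges l k vs"
  shows "j * (k - l) + k \<le> length vs"
proof -
  define d where "d = k - l"
  have "l < d" "k = l + d" using assms(2) by (auto simp: d_def)
  have L: "length vs mod d = l" "k \<le> length vs"
    using assms(1) \<open>l < d\<close> by (auto simp: is_lk_path_def d_def)
  then have "d dvd length vs - l" by (metis dvd_minus_mod)
  then have "d dvd length vs - l - d" by (rule dvd_diff_nat) simp
  then have "d dvd length vs - k" using \<open>k = l + d\<close> by (simp add: diff_diff_add)
  have "j \<le> (length vs - k) div d"
    using assms(3) by (simp add: num_edges_def d_def)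
  then have "j * d \<le> (length vs - k) div d * d" by (rule mult_le_mono1)
  also have "\<dots> = length vs - k" using \<open>d dvd length vs - k\<close> by simp
  finally have "j * d \<le> length vs - k" .
  then show ?thesis using L(2) by (simp add: d_def)
qed

context
  fixes l k :: nat and vs :: "'a list"
  assumes path: "is_lk_path l k vs" and lk: "2 * l < k"
begin

lemma path_edge_Int_eq_image:
  assumes "p < num_edges l k vs" "q < num_edges l k vs"
  shows "path_edge l k vs p \<inter> path_edge l k vs q
    = (!) vs ` ({p*(k-l)..<p*(k-l)+k} \<inter> {q*(k-l)..<q*(k-l)+k})"
proof -
  have ends: "p*(k-l)+k \<le> length vs" "q*(k-l)+k \<le> length vs"
    using path_edge_end_le_length[OF path lk] assms by auto
  have inj: "inj_on ((!) vs) {..<length vs}"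
    using path by (intro inj_on_nth) (auto simp: is_lk_path_def)
  show ?thesis
    unfolding path_edge_def
      set_take_drop_eq_image_nth[OF ends(1)] set_take_drop_eq_image_nth[OF ends(2)]
    by (rule inj_on_image_Int[symmetric, OF inj]) (use ends in auto)
qed

lemma card_path_edge_Int:
  assumes "p < num_edges l k vs" "q < num_edges l k vs"
  shows "card (path_edge l k vs p \<inter> path_edge l k vs q)
    = card ({p*(k-l)..<p*(k-l)+k} \<inter> {q*(k-l)..<q*(k-l)+k})"
proof -
  have "p*(k-l)+k \<le> length vs" using path_edge_end_le_length[OF path lk] assms by auto
  then have "inj_on ((!) vs) ({p*(k-l)..<p*(k-l)+k} \<inter> {q*(k-l)..<q*(k-l)+k})"
    using path by (intro inj_on_nth) (auto simp: is_lk_path_def)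
  then show ?thesis by (simp add: path_edge_Int_eq_image assms card_image)
qed

lemma card_path_edge: "j < num_edges l k vs \<Longrightarrow> card (path_edge l k vs j) = k"
  using card_path_edge_Int[of j j] by simp

lemma card_path_edge_Int_Suc:
  "Suc j < num_edges l k vs \<Longrightarrow> card (path_edge l k vs j \<inter> path_edge l k vs (Suc j)) = l"
proof -
  assume "Suc j < num_edges l k vs"
  moreover have "{j*(k-l)..<j*(k-l)+k} \<inter> {Suc j*(k-l)..<Suc j*(k-l)+k}
      = {j*(k-l)+(k-l)..<j*(k-l)+k}"
    using lk by auto
  ultimately show ?thesis using card_path_edge_Int[of j "Suc j"] lk by simp
qed

lemma path_edge_disjoint:
  assumes "p + 2 \<le> q" "q < num_edges l k vs"
  shows "path_edge l k vs p \<inter> path_edge l k vs q = {}"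
proof -
  have "(p + 2) * (k - l) \<le> q * (k - l)" using assms(1) by (rule mult_le_mono1)
  then have "p*(k-l)+k \<le> q*(k-l)" using lk by (simp add: algebra_simps)
  then show ?thesis using assms path_edge_Int_eq_image[of p q] by auto
qed

lemma path_edge_inj:
  assumes "p < q" "q < num_edges l k vs"
  shows "path_edge l k vs p \<noteq> path_edge l k vs q"
proof
  assume eq: "path_edge l k vs p = path_edge l k vs q"
  have "card (path_edge l k vs p \<inter> path_edge l k vs q) < k"
  proof (cases "q = Suc p")
    case True then show ?thesis using card_path_edge_Int_Suc assms lk by auto
  next
    case False then show ?thesis using path_edge_disjoint[of p q] assms lk by auto
  qed
  then show False using eq card_path_edge assms by simp
qed

lemma path_edge_ends_exactly:
  assumes "num_edges l k vs = s + 2"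
    and ends: "{path_edge l k vs j | j. j \<le> s + 1 \<and> path_edge l k vs j \<in> X}
      = {path_edge l k vs 0, path_edge l k vs (s + 1)}"
  shows "path_edge l k vs 0 \<in> X" "path_edge l k vs (s + 1) \<in> X"
    and "j \<in> {1..s} \<Longrightarrow> path_edge l k vs j \<notin> X"
proof -
  let ?E = "path_edge l k vs"
  have "?E 0 \<in> {?E j | j. j \<le> s + 1 \<and> ?E j \<in> X}"
    and "?E (s + 1) \<in> {?E j | j. j \<le> s + 1 \<and> ?E j \<in> X}"
    unfolding ends by simp_all
  then show "?E 0 \<in> X" "?E (s + 1) \<in> X" by auto
  assume j: "j \<in> {1..s}"
  then have "?E 0 \<noteq> ?E j" "?E j \<noteq> ?E (s + 1)"
    using path_edge_inj[of 0 j] path_edge_inj[of j "s + 1"] assms(1) by auto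
  moreover have "?E j \<in> X \<Longrightarrow> ?E j \<in> {?E i | i. i \<le> s + 1 \<and> ?E i \<in> X}" using j by auto
  ultimately show "?E j \<notin> X" unfolding ends by auto
qed

end

locale disjoint_blocks =
  fixes n :: nat and A B :: "nat \<Rightarrow> 'a set"
  assumes disjoint_A: "\<forall>i\<in>{1..2*n}. \<forall>j\<in>{1..2*n}. i \<noteq> j \<longrightarrow> A i \<inter> A j = {}"
    and disjoint_B: "\<forall>i\<in>{1..2*n}. \<forall>j\<in>{1..2*n}. i \<noteq> j \<longrightarrow> B i \<inter> B j = {}"
    and disjoint_A_B: "\<forall>i\<in>{1..2*n}. \<forall>j\<in>{1..2*n}. A i \<inter> B j = {}"
begin

lemma blockU_index_unique:
  "\<lbrakk>x \<in> blockU A B i; x \<in> blockU A B j; i \<in> {1..2*n}; j \<in> {1..2*n}\<rbrakk> \<Longrightarrow> i = j"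
  using disjoint_A disjoint_B disjoint_A_B unfolding blockU_def by blast

lemma tr_subset: "tr n A B e \<subseteq> {1..2*n}"
  by (auto simp: tr_def)

lemma tr_memI: "\<lbrakk>x \<in> e; x \<in> blockU A B t; t \<in> {1..2*n}\<rbrakk> \<Longrightarrow> t \<in> tr n A B e"
  by (auto simp: tr_def)

lemma minS_le: "t \<in> tr n A B e \<Longrightarrow> minS n A B e \<le> t"
  unfolding minS_def using tr_subset by (meson Min_le finite_atLeastAtMost finite_subset)

lemma minS_in_tr:
  assumes "e \<subseteq> groundV n A B" "e \<noteq> {}"
  shows "minS n A B e \<in> tr n A B e"
proof -
  obtain x t where "x \<in> e" "t \<in> {1..2*n}" "x \<in> blockU A B t"
    using assms unfolding groundV_def by blast
  then have "tr n A B e \<noteq> {}" using tr_memI by blast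
  then show ?thesis unfolding minS_def using tr_subset by (meson Min_in finite_atLeastAtMost finite_subset)
qed

lemma H11E:
  assumes "e \<in> H11 k n G A B" and G: "\<forall>x\<in>G. x \<subseteq> {1..n} \<and> card x = 2"
  obtains a b where "a \<noteq> b" "a \<in> {1..n}" "b \<in> {1..n}" "tr1 n A B e = {a, b}"
    "card (A a \<inter> e) \<ge> k div 2" "card (A b \<inter> e) \<ge> k div 2" "card (e - (A a \<union> A b)) \<le> 1"
proof -
  obtain a b where ab: "{a,b} \<in> G" "tr1 n A B e = {a, b}" "card (A a \<inter> e) \<ge> k div 2"
     "card (A b \<inter> e) \<ge> k div 2" and fe: "finite e" "card e = k"
    using assms(1) by (auto simp: H11_def)
  have "{a,b} \<subseteq> {1..n}" "card {a,b} = 2" using G ab(1) by auto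
  then have abn: "a \<noteq> b" "a \<in> {1..n}" "b \<in> {1..n}" by auto
  then have "A a \<inter> A b = {}" using disjoint_A by auto
  then have "card (e \<inter> (A a \<union> A b)) = card (A a \<inter> e) + card (A b \<inter> e)"
    using fe by (subst card_Un_disjoint[symmetric]) (auto intro: arg_cong[where f = card])
  moreover have "card (e - (A a \<union> A b)) = card e - card (e \<inter> (A a \<union> A b))"
    using fe by (simp add: card_Diff_subset_Int Diff_Int2 card_Diff_subset)
  ultimately have "card (e - (A a \<union> A b)) \<le> 1" using ab fe by linarith
  then show ?thesis using that ab abn by blast
qed

lemma H12E:
  assumes "e \<in> H12 l k n A B" "l < k"
  obtains i where "i \<in> {1..n}" "minS n A B e = i" "e \<subseteq> A i \<union> A (n + i)"
    "card (A i \<inter> e) = l + 1" "card (A (n + i) \<inter> e) = k - l - 1"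
proof -
  obtain i where i: "i \<in> {1..n}" "tr n A B e = {i, n+i}" "card (A i \<inter> e) = l + 1"
    "card (A (n+i) \<inter> e) = k - l - 1" and fe: "finite e" "card e = k"
    using assms(1) by (auto simp: H12_def)
  have "A i \<inter> A (n+i) = {}" using disjoint_A i(1) by auto
  then have "card (e \<inter> (A i \<union> A (n+i))) = card (A i \<inter> e) + card (A (n+i) \<inter> e)"
    using fe by (subst card_Un_disjoint[symmetric]) (auto intro: arg_cong[where f = card])
  then have "card (e \<inter> (A i \<union> A (n+i))) = card e" using i fe assms(2) by simp
  then have "e \<subseteq> A i \<union> A (n+i)" using fe by (metis card_subset_eq inf_le1 le_iff_inf)
  moreover have "minS n A B e = i" unfolding minS_def using i by simp
  ultimately show ?thesis using that i by blast
qed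

lemma H11_H12_disjoint:
  assumes "\<forall>x\<in>G. x \<subseteq> {1..n} \<and> card x = 2"
  shows "H11 k n G A B \<inter> H12 l k n A B = {}"
proof (intro equals0I)
  fix e assume "e \<in> H11 k n G A B \<inter> H12 l k n A B"
  then obtain a b where "a \<noteq> b" "tr1 n A B e = {a, b}"
    using H11E assms by (metis IntD1)
  moreover obtain i where "i \<in> {1..n}" "tr n A B e = {i, n+i}"
    using \<open>e \<in> H11 k n G A B \<inter> H12 l k n A B\<close> by (auto simp: H12_def)
  then have "tr1 n A B e = {i}" by (auto simp: tr1_def)
  ultimately show False by (metis insertI1 insert_commute singletonD)
qed

lemma H2_overlap_meets_min_block:
  assumes "e \<in> H2 l k n A B" "S \<subseteq> e" "l \<le> card S" "1 \<le> l"
  obtains x where "x \<in> S" "x \<in> blockU A B (minS n A B e)"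
proof -
  let ?U = "blockU A B (minS n A B e)"
  have fe: "finite e" "card e = k" "k - l + 1 \<le> card (e \<inter> ?U)"
    using assms(1) by (auto simp: H2_def)
  have "card (e - ?U) = card e - card (e \<inter> ?U)"
    using fe by (simp add: card_Diff_subset_Int Diff_Int2 card_Diff_subset)
  then have "card (e - ?U) < card S" using assms(3,4) fe by linarith
  then have "\<not> S \<subseteq> e - ?U" using fe by (meson card_mono finite_Diff leD)
  then show ?thesis using that assms(2) by blast
qed

lemma H2_minS_range:
  assumes "e \<in> H2 l k n A B"
  shows "minS n A B e \<in> {1..2*n}"
proof -
  have "e \<noteq> {}" "e \<subseteq> groundV n A B" using assms by (auto simp: H2_def)
  then show ?thesis using minS_in_tr tr_subset by blast
qed

lemma H2_minS_eq_if_overlap: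
  assumes "f \<in> H2 l k n A B" "g \<in> H2 l k n A B" "card (f \<inter> g) = l" "1 \<le> l"
  shows "minS n A B f = minS n A B g"
proof -
  obtain x where x: "x \<in> f \<inter> g" "x \<in> blockU A B (minS n A B f)"
    using H2_overlap_meets_min_block[OF assms(1) Int_lower1] assms(3,4) by auto
  obtain y where y: "y \<in> f \<inter> g" "y \<in> blockU A B (minS n A B g)"
    using H2_overlap_meets_min_block[OF assms(2) Int_lower2] assms(3,4) by auto
  have "minS n A B g \<le> minS n A B f"
    using x H2_minS_range[OF assms(1)] by (blast intro: minS_le tr_memI)
  moreover have "minS n A B f \<le> minS n A B g"
    using y H2_minS_range[OF assms(2)] by (blast intro: minS_le tr_memI)
  ultimately show ?thesis by simp
qed

definition column :: "nat \<Rightarrow> nat" where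
  "column m = (if m \<le> n then m else m - n)"

lemma H12_column_of_vertex:
  assumes "f \<in> H12 l k n A B" "l < k" "x \<in> f" "x \<in> blockU A B m" "m \<in> {1..2*n}"
  shows "column m = minS n A B f" and "minS n A B f \<in> {1..n}"
proof -
  obtain i where i: "i \<in> {1..n}" "minS n A B f = i" "f \<subseteq> A i \<union> A (n + i)"
    using H12E[OF assms(1,2)] by blast
  have "x \<in> blockU A B i \<or> x \<in> blockU A B (n + i)"
    using i(3) assms(3) by (auto simp: blockU_def)
  then have "m = i \<or> m = n + i"
    using blockU_index_unique[OF assms(4)] assms(5) i(1) by force
  then show "column m = minS n A B f" "minS n A B f \<in> {1..n}"
    using i by (auto simp: column_def)
qed

lemma column_minS_eq_if_overlap:
  assumes f: "f \<in> H12 l k n A B \<union> H2 l k n A B" and g: "g \<in> H12 l k n A B \<union> H2 l k n A B"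
    and fg: "card (f \<inter> g) = l" and l: "1 \<le> l" "l < k"
  shows "column (minS n A B f) = column (minS n A B g)"
proof -
  have H12_H2: "column (minS n A B f) = column (minS n A B g)"
    if hyps: "f \<in> H12 l k n A B" "g \<in> H2 l k n A B" "card (f \<inter> g) = l" for f g
  proof -
    obtain x where x: "x \<in> f \<inter> g" "x \<in> blockU A B (minS n A B g)"
      using H2_overlap_meets_min_block[OF hyps(2) Int_lower2] hyps(3) l(1) by auto
    have "column (minS n A B g) = minS n A B f" "minS n A B f \<in> {1..n}"
      using H12_column_of_vertex[OF hyps(1) l(2) _ x(2) H2_minS_range[OF hyps(2)]] x(1) by auto
    then show ?thesis by (simp add: column_def)
  qed
  consider "f \<in> H12 l k n A B" "g \<in> H12 l k n A B" | "f \<in> H12 l k n A B" "g \<in> H2 l k n A B"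
    | "f \<in> H2 l k n A B" "g \<in> H12 l k n A B" | "f \<in> H2 l k n A B" "g \<in> H2 l k n A B"
    using f g by blast
  then show ?thesis
  proof cases
    case 1
    obtain x where "x \<in> f \<inter> g" using fg l(1) by (metis card.empty equals0I not_one_le_zero)
    moreover obtain m where m: "m \<in> {1..2*n}" "x \<in> blockU A B m"
      using 1 \<open>x \<in> f \<inter> g\<close> by (auto simp: H12_def groundV_def)
    ultimately have "column m = minS n A B f" "column m = minS n A B g"
      "minS n A B f \<in> {1..n}" "minS n A B g \<in> {1..n}"
      using H12_column_of_vertex[OF 1(1) l(2) _ m(2,1)] H12_column_of_vertex[OF 1(2) l(2) _ m(2,1)]
      by auto
    then show ?thesis by (simp add: column_def)
  next
    case 2 then show ?thesis using H12_H2 fg by blast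
  next
    case 3 then show ?thesis using H12_H2[of g f] fg by (simp add: Int_commute)
  next
    case 4 then show ?thesis using H2_minS_eq_if_overlap fg l(1) by simp
  qed
qed

lemma minS_in_tr1_if_overlap_H11:
  assumes e: "e \<in> H11 k n G A B" and G: "\<forall>x\<in>G. x \<subseteq> {1..n} \<and> card x = 2"
    and g: "g \<in> H12 l k n A B \<union> H2 l k n A B" and eg: "card (e \<inter> g) = l" and l: "2 \<le> l" "l < k"
  shows "minS n A B g \<in> tr1 n A B e"
proof -
  obtain a b where ab: "a \<in> {1..n}" "b \<in> {1..n}" "tr1 n A B e = {a, b}"
    "card (e - (A a \<union> A b)) \<le> 1" using H11E[OF e G] by metis
  have "finite e" using e by (auto simp: H11_def)
  have "\<not> e \<inter> g \<subseteq> e - (A a \<union> A b)"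
  proof
    assume "e \<inter> g \<subseteq> e - (A a \<union> A b)"
    then have "card (e \<inter> g) \<le> 1" using ab(4) \<open>finite e\<close> by (meson card_mono finite_Diff le_trans)
    then show False using eg l(1) by simp
  qed
  then obtain y c where y: "y \<in> e \<inter> g" "y \<in> A c" "c \<in> {a, b}" by blast
  then have c: "c \<in> {1..n}" "c \<in> tr1 n A B e" and yU: "y \<in> blockU A B c"
    using ab by (auto simp: blockU_def)
  show ?thesis
  proof (cases "g \<in> H12 l k n A B")
    case True
    then show ?thesis
      using H12_column_of_vertex[OF True l(2), of y c] y yU c by (auto simp: column_def)
  next
    case False
    then have g2: "g \<in> H2 l k n A B" using g by blast
    obtain x where "x \<in> e \<inter> g" "x \<in> blockU A B (minS n A B g)"
      using H2_overlap_meets_min_block[OF g2 Int_lower2] eg l(1) by auto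
    then have "minS n A B g \<in> tr n A B e"
      using H2_minS_range[OF g2] by (blast intro: tr_memI)
    moreover have "c \<in> tr n A B g" using y yU c(1) by (intro tr_memI) auto
    then have "minS n A B g \<le> c" by (rule minS_le)
    ultimately show ?thesis using c(1) by (auto simp: tr1_def tr_def)
  qed
qed

end

(* E 0 = e, E j = e_j for 1 \<le> j \<le> s, E (s + 1) = e' *)
locale H11_ended_path = disjoint_blocks n A B for n :: nat and A B :: "nat \<Rightarrow> 'a set" +
  fixes k l s :: nat and G :: "nat set set" and E :: "nat \<Rightarrow> 'a set"
  assumes l_bounds: "2 \<le> l" "2 * l < k"
    and G_edges: "\<forall>x\<in>G. x \<subseteq> {1..n} \<and> card x = 2"
    and finite_A: "\<forall>i\<in>{1..2*n}. finite (A i)"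
    and card_A_low: "\<forall>i\<in>{1..n}. card (A i) = 2 * (k div 2) + l"
    and card_A_high: "\<forall>i\<in>{n+1..2*n}. card (A i) = 2 * k - 2 * l - 3"
    and s_pos: "1 \<le> s"
    and overlap: "\<And>j. j \<le> s \<Longrightarrow> card (E j \<inter> E (Suc j)) = l"
    and far_disjoint: "\<And>p q. \<lbrakk>p + 2 \<le> q; q \<le> s + 1\<rbrakk> \<Longrightarrow> E p \<inter> E q = {}"
    and first_H11: "E 0 \<in> H11 k n G A B" and last_H11: "E (s + 1) \<in> H11 k n G A B"
    and inner: "\<And>j. j \<in> {1..s} \<Longrightarrow> E j \<in> H12 l k n A B \<union> H2 l k n A B"
begin

definition common_index :: nat where
  "common_index = minS n A B (E 1)"

lemma common_index_in_tr1_first: "common_index \<in> tr1 n A B (E 0)"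
  unfolding common_index_def
  using minS_in_tr1_if_overlap_H11[OF first_H11 G_edges inner overlap] l_bounds s_pos by auto

lemma common_index_range: "common_index \<in> {1..n}"
  using common_index_in_tr1_first by (auto simp: tr1_def)

lemma column_minS_inner:
  assumes "1 \<le> j" "j \<le> s"
  shows "column (minS n A B (E j)) = common_index"
  using assms
proof (induction j rule: dec_induct)
  case base
  then show ?case using common_index_range by (simp add: common_index_def column_def)
next
  case (step j)
  have "column (minS n A B (E j)) = column (minS n A B (E (Suc j)))"
    using column_minS_eq_if_overlap[OF inner inner overlap] step l_bounds by auto
  then show ?case using step by simp
qed

lemma minS_last_in_tr1: "minS n A B (E s) \<in> tr1 n A B (E (s + 1))"
  using minS_in_tr1_if_overlap_H11[OF last_H11 G_edges inner[of s]] overlap[of s] l_bounds s_pos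
  by (simp add: Int_commute)

lemma minS_last: "minS n A B (E s) = common_index"
proof -
  have "minS n A B (E s) \<le> n" using minS_last_in_tr1 by (auto simp: tr1_def)
  then show ?thesis using column_minS_inner[of s] s_pos by (simp add: column_def)
qed

lemma common_index_in_tr1_last: "common_index \<in> tr1 n A B (E (s + 1))"
  using minS_last_in_tr1 minS_last by simp

lemma inner_H12_minS_cards:
  assumes "j \<in> {1..s}" "E j \<in> H12 l k n A B"
  shows "minS n A B (E j) = common_index" "card (A common_index \<inter> E j) = l + 1"
    and "card (A (n + common_index) \<inter> E j) = k - l - 1"
proof -
  obtain i where i: "i \<in> {1..n}" "minS n A B (E j) = i"
    "card (A i \<inter> E j) = l + 1" "card (A (n + i) \<inter> E j) = k - l - 1"
    using H12E[OF assms(2)] l_bounds by auto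
  have "i = common_index" using column_minS_inner[of j] assms(1) i(1,2) by (auto simp: column_def)
  with i show "minS n A B (E j) = common_index" "card (A common_index \<inter> E j) = l + 1"
    and "card (A (n + common_index) \<inter> E j) = k - l - 1" by auto
qed

lemma no_far_H12_pair:
  assumes "1 \<le> p" "p + 2 \<le> q" "q \<le> s" "E p \<in> H12 l k n A B" "E q \<in> H12 l k n A B"
  shows False
proof -
  let ?X = "A (n + common_index)"
  have fin: "finite ?X" and card: "card ?X = 2 * k - 2 * l - 3"
    using finite_A card_A_high common_index_range by auto
  have "E p \<inter> E q = {}" using far_disjoint assms by auto
  then have "card (?X \<inter> E p) + card (?X \<inter> E q) = card ((?X \<inter> E p) \<union> (?X \<inter> E q))"
    using fin by (intro card_Un_disjoint[symmetric]) auto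
  also have "\<dots> \<le> card ?X" using fin by (intro card_mono) auto
  finally show False using inner_H12_minS_cards(3)[of p] inner_H12_minS_cards(3)[of q] assms card l_bounds by simp
qed

lemma no_interior_H12:
  assumes "2 \<le> j" "j < s" "E j \<in> H12 l k n A B"
  shows False
proof -
  let ?X = "A common_index"
  have fin: "finite ?X" and card: "card ?X = 2 * (k div 2) + l"
    using finite_A card_A_low common_index_range by auto
  have H11_share: "k div 2 \<le> card (?X \<inter> E i)"
    if "E i \<in> H11 k n G A B" "common_index \<in> tr1 n A B (E i)" for i
    using H11E[OF that(1) G_edges] that(2) by (metis empty_iff insert_iff)
  have disj: "E 0 \<inter> E j = {}" "E j \<inter> E (s + 1) = {}" "E 0 \<inter> E (s + 1) = {}"
    using far_disjoint assms s_pos by auto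
  have "card (?X \<inter> E 0) + card (?X \<inter> E j) + card (?X \<inter> E (s + 1))
      = card ((?X \<inter> E 0) \<union> (?X \<inter> E j) \<union> (?X \<inter> E (s + 1)))"
    using disj fin by (simp add: card_Un_disjoint Int_Un_distrib2 disjoint_iff)
  also have "\<dots> \<le> card ?X" using fin by (intro card_mono) auto
  finally show False
    using inner_H12_minS_cards(2)[of j] assms card H11_share[OF first_H11 common_index_in_tr1_first]
      H11_share[OF last_H11 common_index_in_tr1_last] by simp
qed

lemma H12_edges_at_ends:
  assumes "j \<le> s + 1" "E j \<in> H12 l k n A B"
  shows "j = 1 \<or> j = s"
proof -
  have "E j \<notin> H11 k n G A B" using assms(2) H11_H12_disjoint[OF G_edges] by blast
  then have "j \<noteq> 0" "j \<noteq> s + 1" using first_H11 last_H11 by metis+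
  then show ?thesis using no_interior_H12[of j] assms by fastforce
qed

lemma H2_run_minS_eq:
  assumes "p \<le> q" "q \<le> s" "\<And>i. i \<in> {p..q} \<Longrightarrow> E i \<in> H2 l k n A B"
  shows "minS n A B (E q) = minS n A B (E p)"
  using assms
proof (induction q rule: dec_induct)
  case base
  then show ?case by simp
next
  case (step q)
  have "minS n A B (E q) = minS n A B (E (Suc q))"
    using H2_minS_eq_if_overlap[OF step.prems(2) step.prems(2) overlap] step l_bounds by auto
  then show ?case using step by simp
qed

lemma minS_inner:
  assumes "j \<in> {1..s}"
  shows "minS n A B (E j) = common_index"
proof (rule ccontr)
  assume ne: "minS n A B (E j) \<noteq> common_index"
  have H2_of_inner: "E i \<in> H2 l k n A B" if "2 \<le> i" "i < s" for i
    using inner[of i] no_interior_H12[OF that] that by auto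
  have "j \<noteq> 1" "j \<noteq> s" using ne minS_last by (auto simp: common_index_def)
  then have j: "2 \<le> j" "j < s" using assms by auto
  consider "E 1 \<in> H2 l k n A B" | "E s \<in> H2 l k n A B"
    using inner[of 1] inner[of s] no_far_H12_pair[of 1 s] s_pos j by fastforce
  then show False
  proof cases
    case 1
    have "E i \<in> H2 l k n A B" if "i \<in> {1..j}" for i
      using 1 H2_of_inner[of i] that j by (cases "i = 1") auto
    then have "minS n A B (E j) = minS n A B (E 1)" using H2_run_minS_eq[of 1 j] j by auto
    then show False using ne by (simp add: common_index_def)
  next
    case 2
    have "E i \<in> H2 l k n A B" if "i \<in> {j..s}" for i
      using 2 H2_of_inner[of i] that j by (cases "i = s") auto
    then have "minS n A B (E s) = minS n A B (E j)" using H2_run_minS_eq[of j s] j by auto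
    then show False using ne minS_last by simp
  qed
qed

end

theorem proposition3p4:
  fixes k l n s :: nat and G :: "nat set set" and A B :: "nat \<Rightarrow> 'a set" and vs :: "'a list"
  assumes kl: "2 \<le> l" "2 * l < k" and n1: "n \<ge> 1"
    and G: "\<forall>x\<in>G. x \<subseteq> {1..n} \<and> card x = 2"
    and finA: "\<forall>i\<in>{1..2*n}. finite (A i)" and finB: "\<forall>i\<in>{1..2*n}. finite (B i)"
    and disjAA: "\<forall>i\<in>{1..2*n}. \<forall>j\<in>{1..2*n}. i \<noteq> j \<longrightarrow> A i \<inter> A j = {}"
    and disjBB: "\<forall>i\<in>{1..2*n}. \<forall>j\<in>{1..2*n}. i \<noteq> j \<longrightarrow> B i \<inter> B j = {}"
    and disjAB: "\<forall>i\<in>{1..2*n}. \<forall>j\<in>{1..2*n}. A i \<inter> B j = {}"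
    and cardA1: "\<forall>i\<in>{1..n}. card (A i) = 2 * (k div 2) + l"
    and cardA2: "\<forall>i\<in>{n+1..2*n}. card (A i) = 2 * k - 2 * l - 3"
    and s1: "s \<ge> 1"
    and path: "is_lk_path l k vs" and nedges: "num_edges l k vs = s + 2"
    and inH: "\<forall>j\<le>s+1. path_edge l k vs j \<in> H11 k n G A B \<union> H12 l k n A B \<union> H2 l k n A B"
    and H11exact: "{path_edge l k vs j | j. j \<le> s + 1 \<and> path_edge l k vs j \<in> H11 k n G A B}
                   = {path_edge l k vs 0, path_edge l k vs (s + 1)}"
  shows "(\<forall>j\<le>s+1. path_edge l k vs j \<in> H12 l k n A B \<longrightarrow>
              path_edge l k vs j \<in> {path_edge l k vs 1, path_edge l k vs s})
       \<and> (path_edge l k vs 1 \<in> H12 l k n A B \<and> path_edge l k vs s \<in> H12 l k n A B \<and>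
            path_edge l k vs 1 \<noteq> path_edge l k vs s \<longrightarrow> s = 2)
       \<and> (\<forall>i\<in>{1..s}. minS n A B (path_edge l k vs i)
              \<in> tr1 n A B (path_edge l k vs 0) \<inter> tr1 n A B (path_edge l k vs (s + 1)))"
proof -
  interpret disjoint_blocks n A B using disjAA disjBB disjAB by unfold_locales
  note H11_ends = path_edge_ends_exactly[OF path kl(2) nedges H11exact]
  interpret H11_ended_path n A B k l s G "path_edge l k vs"
  proof unfold_locales
    show "card (path_edge l k vs j \<inter> path_edge l k vs (Suc j)) = l" if "j \<le> s" for j
      using card_path_edge_Int_Suc[OF path kl(2)] nedges that by simp
    show "path_edge l k vs p \<inter> path_edge l k vs q = {}" if "p + 2 \<le> q" "q \<le> s + 1" for p q
      using path_edge_disjoint[OF path kl(2)] nedges that by simp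
    show "path_edge l k vs j \<in> H12 l k n A B \<union> H2 l k n A B" if "j \<in> {1..s}" for j
      using inH[rule_format, of j] H11_ends(3)[OF that] that by auto
  qed (use kl G finA cardA1 cardA2 s1 H11_ends in auto)
  have "s = 2" if "path_edge l k vs 1 \<in> H12 l k n A B" "path_edge l k vs s \<in> H12 l k n A B"
    and "path_edge l k vs 1 \<noteq> path_edge l k vs s"
  proof -
    have "s \<noteq> 1" using that(3) by auto
    then show ?thesis using no_far_H12_pair[of 1 s] that(1,2) s1 by (cases "s \<le> 2") auto
  qed
  then show ?thesis
    using H12_edges_at_ends minS_inner common_index_in_tr1_first common_index_in_tr1_last by auto
qed

end
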